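(* Let $V(x)$ be a real function and $\epsilon$ a specific real constant. Let $\phi_w(x)$ be a solution of $$-\phi_w''+(V(x)-\epsilon)\phi_w=0,$$ and let $\gamma(x)$ be a never vanishing differentiable function defined on the domain of $V(x)$. Suppose $\phi_v(x)\neq\phi_w(x)$ is a solution of $$-\phi_v''+\Big(V(x)+\frac{1}{\gamma^2(x)}-\epsilon\Big)\phi_v=0,$$ defined on the same domain as $\phi_w(x)$. Then the function defined, up to a nonvanishing multiplicative constant, by $$\phi_{\overline w}=\gamma\left(-\frac{d}{dx}+\frac{\phi_v'}{\phi_v}\right)\phi_w$$ satisfies $$-\phi_{\overline w}''+\left\{V(x)-2\Big(\frac{\gamma'}{\gamma}\,v+v'\Big)+\frac{\gamma''}{\gamma}-\epsilon\right\}\phi_{\overline w}=0,$$ where $v(x)$ is the function defined locally by $v=\phi_v'/\phi_v$.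
   Context: Primes denote derivatives with respect to $x$. The statements are local: they hold on intervals where $\phi_v$ does not vanish, so that $v=\phi_v'/\phi_v$ is defined. *)

theory Defs
  imports "HOL-Analysis.Analysis"
begin

end

(*
  Write v = phi_v'/phi_v.  Because phi_v solves the equation with potential Q + 1/gamma^2, v obeys
  the Riccati equation v' = Q + 1/gamma^2 - v^2, and this makes the first-order operator
  u = -phi_w' + v phi_w intertwine the two equations: u' = phi_w/gamma^2 - v u.  Differentiating
  W = gamma u twice and eliminating phi_w' = v phi_w - u and v^2 with these two identities leaves
  W'' = (Q - 2 (gamma'/gamma v + v') + gamma''/gamma) W.
*)
theory Submission
  imports Defs
begin

definition solves_schroedinger :: "(real \<Rightarrow> real) \<Rightarrow> (real \<Rightarrow> real) \<Rightarrow> real set \<Rightarrow> bool" where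
  "solves_schroedinger Q \<phi> S \<longleftrightarrow>
     (\<forall>x\<in>S. \<phi> differentiable (at x) \<and> deriv \<phi> differentiable (at x) \<and>
            deriv (deriv \<phi>) x = Q x * \<phi> x)"

lemma solves_schroedinger_intro:
  assumes "open S"
    and "\<And>x. x \<in> S \<Longrightarrow> (\<phi> has_real_derivative \<phi>' x) (at x)"
    and "\<And>x. x \<in> S \<Longrightarrow> (\<phi>' has_real_derivative Q x * \<phi> x) (at x)"
  shows "solves_schroedinger Q \<phi> S"
  unfolding solves_schroedinger_def
proof (intro ballI conjI)
  fix x assume x: "x \<in> S"
  show "\<phi> differentiable (at x)"
    using assms(2)[OF x] real_differentiable_def by blast
  have "(deriv \<phi> has_real_derivative Q x * \<phi> x) (at x)"
    using has_field_derivative_transform_within_open[OF assms(3)[OF x] \<open>open S\<close> x]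
      assms(2) DERIV_imp_deriv by metis
  then show "deriv \<phi> differentiable (at x)" "deriv (deriv \<phi>) x = Q x * \<phi> x"
    using real_differentiable_def DERIV_imp_deriv by blast+
qed

lemma solves_schroedingerD:
  assumes "solves_schroedinger Q \<phi> S" and "x \<in> S"
  shows "(\<phi> has_real_derivative deriv \<phi> x) (at x)"
    and "(deriv \<phi> has_real_derivative Q x * \<phi> x) (at x)"
  using assms unfolding solves_schroedinger_def
  by (metis DERIV_deriv_iff_real_differentiable)+

lemma solves_schroedinger_scale:
  assumes "open S" and "solves_schroedinger Q \<phi> S"
  shows "solves_schroedinger Q (\<lambda>x. c * \<phi> x) S"
  by (rule solves_schroedinger_intro[OF \<open>open S\<close>, where \<phi>' = "\<lambda>x. c * deriv \<phi> x"])
     (auto intro!: derivative_eq_intros solves_schroedingerD[OF assms(2)])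

lemma riccati_log_deriv:
  assumes "solves_schroedinger Q \<phi> S" and "x \<in> S" and "\<phi> x \<noteq> 0"
  shows "((\<lambda>x. deriv \<phi> x / \<phi> x) has_real_derivative Q x - (deriv \<phi> x / \<phi> x)\<^sup>2) (at x)"
  using assms(3)
  by (auto intro!: derivative_eq_intros solves_schroedingerD[OF assms(1,2)]
           simp: power2_eq_square field_simps)

lemma factorization_operator_derivative:
  assumes "solves_schroedinger Q\<^sub>w \<phi> S" and "x \<in> S"
    and "(v has_real_derivative Q\<^sub>v - (v x)\<^sup>2) (at x)"
  shows "((\<lambda>x. - deriv \<phi> x + v x * \<phi> x) has_real_derivative
           (Q\<^sub>v - Q\<^sub>w x) * \<phi> x - v x * (- deriv \<phi> x + v x * \<phi> x)) (at x)"
  by (auto intro!: derivative_eq_intros assms(3) solves_schroedingerD[OF assms(1,2)]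
           simp: power2_eq_square algebra_simps)

lemma darboux_transform_solves_schroedinger:
  fixes Q \<gamma> \<phi>w \<phi>v :: "real \<Rightarrow> real"
  defines "v \<equiv> \<lambda>x. deriv \<phi>v x / \<phi>v x"
  assumes S: "open S"
    and w: "solves_schroedinger Q \<phi>w S"
    and v: "solves_schroedinger (\<lambda>x. Q x + 1 / (\<gamma> x)\<^sup>2) \<phi>v S"
    and v_nz: "\<And>x. x \<in> S \<Longrightarrow> \<phi>v x \<noteq> 0"
    and g: "\<And>x. x \<in> S \<Longrightarrow> \<gamma> differentiable (at x) \<and> deriv \<gamma> differentiable (at x)"
    and g_nz: "\<And>x. x \<in> S \<Longrightarrow> \<gamma> x \<noteq> 0"
  shows "solves_schroedinger
           (\<lambda>x. Q x - 2 * (deriv \<gamma> x / \<gamma> x * v x + deriv v x) + deriv (deriv \<gamma>) x / \<gamma> x)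
           (\<lambda>x. \<gamma> x * (- deriv \<phi>w x + v x * \<phi>w x)) S"
proof -
  define u where "u = (\<lambda>x. - deriv \<phi>w x + v x * \<phi>w x)"
  define v1 where "v1 = (\<lambda>x. Q x + 1 / (\<gamma> x)\<^sup>2 - (v x)\<^sup>2)"
  define u1 where "u1 = (\<lambda>x. \<phi>w x / (\<gamma> x)\<^sup>2 - v x * u x)"
  define W1 where "W1 = (\<lambda>x. deriv \<gamma> x * u x + \<phi>w x / \<gamma> x - v x * (\<gamma> x * u x))"
  have dv: "(v has_real_derivative v1 x) (at x)" if "x \<in> S" for x
    unfolding v_def v1_def using riccati_log_deriv[OF v that v_nz[OF that]] .
  have du: "(u has_real_derivative u1 x) (at x)" if "x \<in> S" for x
    using factorization_operator_derivative[OF w that dv[OF that, unfolded v1_def]]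
    by (simp add: u_def u1_def algebra_simps)
  have "solves_schroedinger (\<lambda>x. Q x - 2 * (deriv \<gamma> x / \<gamma> x * v x + v1 x)
                                  + deriv (deriv \<gamma>) x / \<gamma> x) (\<lambda>x. \<gamma> x * u x) S"
  proof (rule solves_schroedinger_intro[OF S])
    fix x assume x: "x \<in> S"
    have dg: "(\<gamma> has_real_derivative deriv \<gamma> x) (at x)"
      "(deriv \<gamma> has_real_derivative deriv (deriv \<gamma>) x) (at x)"
      using g[OF x] by (simp_all add: DERIV_deriv_iff_real_differentiable)
    note derivs = dg solves_schroedingerD[OF w x] dv[OF x] du[OF x]
    have \<gamma>x: "\<gamma> x \<noteq> 0" using g_nz[OF x] .
    show "((\<lambda>x. \<gamma> x * u x) has_real_derivative W1 x) (at x)"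
      unfolding W1_def using \<gamma>x
      by (auto intro!: derivative_eq_intros derivs simp: u1_def power2_eq_square field_simps)
    define W2 where "W2 =
      deriv (deriv \<gamma>) x * u x + deriv \<gamma> x * u1 x
      + (deriv \<phi>w x * \<gamma> x - \<phi>w x * deriv \<gamma> x) / (\<gamma> x)\<^sup>2
      - (v1 x * (\<gamma> x * u x) + v x * (deriv \<gamma> x * u x + \<gamma> x * u1 x))"
    have "(W1 has_real_derivative W2) (at x)"
      unfolding W1_def W2_def using \<gamma>x
      by (auto intro!: derivative_eq_intros derivs simp: power2_eq_square field_simps)
    moreover have "W2 = (Q x - 2 * (deriv \<gamma> x / \<gamma> x * v x + v1 x) + deriv (deriv \<gamma>) x / \<gamma> x)
                        * (\<gamma> x * u x)"
      unfolding W2_def u1_def v1_def u_def using \<gamma>x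
      by (simp add: field_simps power2_eq_square)
    ultimately show "(W1 has_real_derivative
        (Q x - 2 * (deriv \<gamma> x / \<gamma> x * v x + v1 x) + deriv (deriv \<gamma>) x / \<gamma> x) * (\<gamma> x * u x)) (at x)"
      by simp
  qed
  moreover have "deriv v x = v1 x" if "x \<in> S" for x
    using dv[OF that] DERIV_imp_deriv by blast
  ultimately show ?thesis
    unfolding solves_schroedinger_def u_def by simp
qed

theorem theorem3:
  fixes V \<gamma> \<phi>w \<phi>v :: "real \<Rightarrow> real" and \<epsilon> c :: real and S :: "real set"
  assumes S: "open S"
    and w_diff: "\<forall>x\<in>S. \<phi>w differentiable (at x) \<and> deriv \<phi>w differentiable (at x)"
    and w_eq: "\<forall>x\<in>S. - deriv (deriv \<phi>w) x + (V x - \<epsilon>) * \<phi>w x = 0"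
    and g_diff: "\<forall>x\<in>S. \<gamma> differentiable (at x) \<and> deriv \<gamma> differentiable (at x)"
    and g_nz: "\<forall>x\<in>S. \<gamma> x \<noteq> 0"
    and v_diff: "\<forall>x\<in>S. \<phi>v differentiable (at x) \<and> deriv \<phi>v differentiable (at x)"
    and v_eq: "\<forall>x\<in>S. - deriv (deriv \<phi>v) x + (V x + 1 / (\<gamma> x)\<^sup>2 - \<epsilon>) * \<phi>v x = 0"
    and v_nz: "\<forall>x\<in>S. \<phi>v x \<noteq> 0"
    and v_ne_w: "\<exists>x\<in>S. \<phi>v x \<noteq> \<phi>w x"
    and c: "c \<noteq> 0"
  shows "let v = (\<lambda>x. deriv \<phi>v x / \<phi>v x);
             \<phi>wb = (\<lambda>x. c * (\<gamma> x * (- deriv \<phi>w x + v x * \<phi>w x)))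
         in \<forall>x\<in>S. \<phi>wb differentiable (at x) \<and> deriv \<phi>wb differentiable (at x) \<and>
              - deriv (deriv \<phi>wb) x
              + (V x - 2 * (deriv \<gamma> x / \<gamma> x * v x + deriv v x)
                 + deriv (deriv \<gamma>) x / \<gamma> x - \<epsilon>) * \<phi>wb x = 0"
proof -
  \<comment> \<open>The equation holds without \<open>v_ne_w\<close> and \<open>c \<noteq> 0\<close>.\<close>
  have "solves_schroedinger (\<lambda>x. V x - \<epsilon>) \<phi>w S"
    using w_diff w_eq by (simp add: solves_schroedinger_def)
  moreover have "solves_schroedinger (\<lambda>x. (V x - \<epsilon>) + 1 / (\<gamma> x)\<^sup>2) \<phi>v S"
    using v_diff v_eq by (simp add: solves_schroedinger_def algebra_simps)
  ultimately have "solves_schroedinger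
      (\<lambda>x. V x - \<epsilon> - 2 * (deriv \<gamma> x / \<gamma> x * (deriv \<phi>v x / \<phi>v x) + deriv (\<lambda>x. deriv \<phi>v x / \<phi>v x) x)
           + deriv (deriv \<gamma>) x / \<gamma> x)
      (\<lambda>x. c * (\<gamma> x * (- deriv \<phi>w x + deriv \<phi>v x / \<phi>v x * \<phi>w x))) S"
    using darboux_transform_solves_schroedinger solves_schroedinger_scale S v_nz g_diff g_nz by blast
  then show ?thesis
    unfolding Let_def solves_schroedinger_def by (simp add: algebra_simps)
qed

end
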